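(* Let $\Gamma\le S_k$, $m\ge1$, let $G,H$ be $(\Gamma,m)$-graphs with labelings $\ell_G,\ell_H$, and let $\sigma=(\sigma_V,\sigma_E)$ be a $(\Gamma,m)$-homomorphism from $G$ to $H$. 1. If $e_1,e_2\in E(G)$ satisfy $e_1^-=e_2^-$, $e_1^+=e_2^+$ and $\ell_H(\sigma_E(e_1))=\ell_H(\sigma_E(e_2))$, then $\ell_G(e_1)=\ell_G(e_2)$. 2. Suppose $G$ is symmetrically labeled (every edge of $G$ has a label of the form $(\lambda,i,\lambda)$), and suppose there is a single $\alpha\in\Gamma$ such that for every edge $e\in E(G)$ and every $a\in\{-,+\}$, $\ell^a_G(e)=\alpha\,\ell^a_H(\sigma_E(e))$. Then the image of $\sigma$ is a symmetrically labeled subgraph of $H$, i.e. every edge $\sigma_E(e)$, $e\in E(G)$, has a label of the form $(\mu,i,\mu)$.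
   Context: A graph $G$ consists of finite sets $V(G)$, $E(G)$ and maps $\iota_G,\tau_G:E(G)\to V(G)$; write $e^-=\iota_G(e)$, $e^+=\tau_G(e)$. $S_k$ is the symmetric group on $[k]=\{1,\dots,k\}$. For $\Gamma\le S_k$, $m\ge1$, a $(\Gamma,m)$-graph is a graph with a labeling $\ell_G:E(G)\to\Gamma\times[m]\times\Gamma$; for $\ell_G(e)=(\gamma^-,j,\gamma^+)$ write $\ell^-_G(e)=\gamma^-$, $\ell^*_G(e)=j$, $\ell^+_G(e)=\gamma^+$. A $(\Gamma,m)$-homomorphism $G\to H$ is a pair $\sigma_V:V(G)\to V(H)$, $\sigma_E:E(G)\to E(H)$ with $\iota_H\sigma_E=\sigma_V\iota_G$, $\tau_H\sigma_E=\sigma_V\tau_G$, $\ell^*_G=\ell^*_H\circ\sigma_E$, and such that for all $e_1,e_2\in E(G)$ and $a,b\in\{-,+\}$ with $e_1^a=e_2^b$: $[\ell^a_G(e_1)]^{-1}\ell^b_G(e_2)=[\ell^a_H(\sigma_E(e_1))]^{-1}\ell^b_H(\sigma_E(e_2))$. *)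

theory Defs
  imports "HOL-Combinatorics.Permutations"
begin

text \<open>Permutations of [k] = {1..k} are represented as functions nat => nat with p permutes {1..k};
  the group product gamma delta is function composition gamma o delta, the inverse is inv.\<close>

type_synonym perm_k = "nat \<Rightarrow> nat"

definition subgroup_Sk :: "nat \<Rightarrow> perm_k set \<Rightarrow> bool" where
  "subgroup_Sk k \<Gamma> \<longleftrightarrow>
     (\<forall>p\<in>\<Gamma>. p permutes {1..k}) \<and> id \<in> \<Gamma> \<and>
     (\<forall>p\<in>\<Gamma>. \<forall>q\<in>\<Gamma>. p \<circ> q \<in> \<Gamma>) \<and> (\<forall>p\<in>\<Gamma>. inv p \<in> \<Gamma>)"

datatype sgn = Minus | Plus

record ('v, 'e) lgraph =
  verts :: "'v set"
  edges :: "'e set"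
  src   :: "'e \<Rightarrow> 'v"
  tgt   :: "'e \<Rightarrow> 'v"
  lab   :: "'e \<Rightarrow> perm_k \<times> nat \<times> perm_k"

definition endpt :: "('v, 'e) lgraph \<Rightarrow> sgn \<Rightarrow> 'e \<Rightarrow> 'v" where
  "endpt G a e = (case a of Minus \<Rightarrow> src G e | Plus \<Rightarrow> tgt G e)"

definition labs :: "('v, 'e) lgraph \<Rightarrow> sgn \<Rightarrow> 'e \<Rightarrow> perm_k" where
  "labs G a e = (case a of Minus \<Rightarrow> fst (lab G e) | Plus \<Rightarrow> snd (snd (lab G e)))"

definition lstar :: "('v, 'e) lgraph \<Rightarrow> 'e \<Rightarrow> nat" where
  "lstar G e = fst (snd (lab G e))"

definition is_graph :: "('v, 'e) lgraph \<Rightarrow> bool" where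
  "is_graph G \<longleftrightarrow> finite (verts G) \<and> finite (edges G) \<and>
     (\<forall>e\<in>edges G. src G e \<in> verts G \<and> tgt G e \<in> verts G)"

definition Gm_graph :: "perm_k set \<Rightarrow> nat \<Rightarrow> ('v, 'e) lgraph \<Rightarrow> bool" where
  "Gm_graph \<Gamma> m G \<longleftrightarrow> is_graph G \<and> (\<forall>e\<in>edges G. lab G e \<in> \<Gamma> \<times> {1..m} \<times> \<Gamma>)"

definition Gm_hom :: "('v, 'e) lgraph \<Rightarrow> ('w, 'f) lgraph \<Rightarrow> ('v \<Rightarrow> 'w) \<Rightarrow> ('e \<Rightarrow> 'f) \<Rightarrow> bool" where
  "Gm_hom G H \<sigma>V \<sigma>E \<longleftrightarrow>
     (\<forall>v\<in>verts G. \<sigma>V v \<in> verts H) \<and> (\<forall>e\<in>edges G. \<sigma>E e \<in> edges H) \<and>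
     (\<forall>e\<in>edges G. src H (\<sigma>E e) = \<sigma>V (src G e) \<and> tgt H (\<sigma>E e) = \<sigma>V (tgt G e)) \<and>
     (\<forall>e\<in>edges G. lstar G e = lstar H (\<sigma>E e)) \<and>
     (\<forall>e1\<in>edges G. \<forall>e2\<in>edges G. \<forall>a b. endpt G a e1 = endpt G b e2 \<longrightarrow>
        inv (labs G a e1) \<circ> labs G b e2 = inv (labs H a (\<sigma>E e1)) \<circ> labs H b (\<sigma>E e2))"

definition sym_labeled_edge :: "('v, 'e) lgraph \<Rightarrow> 'e \<Rightarrow> bool" where
  "sym_labeled_edge G e \<longleftrightarrow> (\<exists>\<mu> i. lab G e = (\<mu>, i, \<mu>))"

end

theory Submission
  imports Defs
begin

text \<open>Both parts are cancellation arguments in the group of permutations. For parallel edges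
  with equal image labels, the homomorphism condition at a common endpoint gives
  \<open>(\<ell>\<^sup>a e\<^sub>1)\<inverse> \<ell>\<^sup>a e\<^sub>2 = id\<close>, so the end labels coincide, and the middle labels agree because
  \<open>\<sigma>\<^sub>E\<close> preserves them. For the second part, \<open>\<alpha> \<ell>\<^sup>-\<^sub>H(\<sigma>\<^sub>E e) = \<ell>\<^sup>-\<^sub>G e = \<ell>\<^sup>+\<^sub>G e = \<alpha> \<ell>\<^sup>+\<^sub>H(\<sigma>\<^sub>E e)\<close>
  and \<open>\<alpha>\<close> can be cancelled on the left.\<close>

lemma subgroup_Sk_bij: "subgroup_Sk k \<Gamma> \<Longrightarrow> p \<in> \<Gamma> \<Longrightarrow> bij p"
  unfolding subgroup_Sk_def using permutes_bij by blast

lemma Gm_graph_labs_bij: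
  assumes "subgroup_Sk k \<Gamma>" "Gm_graph \<Gamma> m G" "e \<in> edges G"
  shows "bij (labs G a e)"
  using assms subgroup_Sk_bij unfolding Gm_graph_def labs_def by (auto split: sgn.splits)

lemma Gm_hom_edge: "Gm_hom G H \<sigma>V \<sigma>E \<Longrightarrow> e \<in> edges G \<Longrightarrow> \<sigma>E e \<in> edges H"
  unfolding Gm_hom_def by blast

lemma Gm_hom_lstar: "Gm_hom G H \<sigma>V \<sigma>E \<Longrightarrow> e \<in> edges G \<Longrightarrow> lstar H (\<sigma>E e) = lstar G e"
  unfolding Gm_hom_def by auto

lemma lab_eq_iff:
  "lab G e1 = lab G' e2 \<longleftrightarrow>
     lstar G e1 = lstar G' e2 \<and> (\<forall>a. labs G a e1 = labs G' a e2)"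
  unfolding lstar_def labs_def by (auto simp: prod_eq_iff split: sgn.splits)

lemma sym_labeled_edge_iff: "sym_labeled_edge G e \<longleftrightarrow> labs G Minus e = labs G Plus e"
  unfolding sym_labeled_edge_def labs_def by (cases "lab G e") auto

lemma bij_inv_comp_eq_id:
  assumes "bij f" "inv f \<circ> g = id"
  shows "f = g"
proof -
  have "f \<circ> inv f = id"
    using assms(1) bij_is_surj surj_iff by blast
  then have "f \<circ> (inv f \<circ> g) = g"
    by (simp flip: comp_assoc)
  with assms(2) show ?thesis
    by simp
qed

lemma Gm_hom_relative_labs:
  assumes "Gm_hom G H \<sigma>V \<sigma>E" "e1 \<in> edges G" "e2 \<in> edges G" "endpt G a e1 = endpt G b e2"
  shows "inv (labs G a e1) \<circ> labs G b e2 = inv (labs H a (\<sigma>E e1)) \<circ> labs H b (\<sigma>E e2)"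
  using assms unfolding Gm_hom_def by blast

lemma Gm_hom_parallel_labs_eq:
  assumes hom: "Gm_hom G H \<sigma>V \<sigma>E" and e: "e1 \<in> edges G" "e2 \<in> edges G"
    and endpt: "endpt G a e1 = endpt G a e2"
    and labH: "labs H a (\<sigma>E e1) = labs H a (\<sigma>E e2)"
    and bijG: "bij (labs G a e1)" and injH: "inj (labs H a (\<sigma>E e1))"
  shows "labs G a e1 = labs G a e2"
proof (rule bij_inv_comp_eq_id[OF bijG])
  have "inv (labs G a e1) \<circ> labs G a e2 = inv (labs H a (\<sigma>E e1)) \<circ> labs H a (\<sigma>E e2)"
    using Gm_hom_relative_labs[OF hom e endpt] .
  also have "\<dots> = inv (labs H a (\<sigma>E e1)) \<circ> labs H a (\<sigma>E e1)"
    by (simp only: labH)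
  also have "\<dots> = id"
    using injH by (rule inv_o_cancel)
  finally show "inv (labs G a e1) \<circ> labs G a e2 = id" .
qed

lemma Gm_hom_parallel_lab_eq:
  assumes \<Gamma>: "subgroup_Sk k \<Gamma>" and "Gm_graph \<Gamma> m G" "Gm_graph \<Gamma> m H"
    and hom: "Gm_hom G H \<sigma>V \<sigma>E" and e: "e1 \<in> edges G" "e2 \<in> edges G"
    and parallel: "src G e1 = src G e2" "tgt G e1 = tgt G e2"
    and labH: "lab H (\<sigma>E e1) = lab H (\<sigma>E e2)"
  shows "lab G e1 = lab G e2"
proof -
  have "labs G a e1 = labs G a e2" for a
  proof (rule Gm_hom_parallel_labs_eq[OF hom e])
    show "endpt G a e1 = endpt G a e2"
      using parallel by (simp add: endpt_def split: sgn.splits)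
    show "labs H a (\<sigma>E e1) = labs H a (\<sigma>E e2)"
      using labH by (simp add: lab_eq_iff)
    show "bij (labs G a e1)"
      using Gm_graph_labs_bij[OF \<Gamma> \<open>Gm_graph \<Gamma> m G\<close> e(1)] .
    show "inj (labs H a (\<sigma>E e1))"
      using Gm_graph_labs_bij[OF \<Gamma> \<open>Gm_graph \<Gamma> m H\<close> Gm_hom_edge[OF hom e(1)]] bij_is_inj
      by blast
  qed
  moreover have "lstar G e1 = lstar G e2"
    using labH Gm_hom_lstar[OF hom] e by (simp add: lab_eq_iff)
  ultimately show ?thesis
    by (simp add: lab_eq_iff)
qed

lemma sym_labeled_edge_left_translate:
  assumes "inj \<alpha>" and translate: "\<And>a. labs G a e = \<alpha> \<circ> labs H a f"
    and "sym_labeled_edge G e"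
  shows "sym_labeled_edge H f"
proof -
  have "\<alpha> \<circ> labs H Minus f = \<alpha> \<circ> labs H Plus f"
    using \<open>sym_labeled_edge G e\<close> by (simp only: sym_labeled_edge_iff flip: translate)
  then show ?thesis
    using \<open>inj \<alpha>\<close> by (simp add: sym_labeled_edge_iff fun_eq_iff inj_eq)
qed

theorem mainTheorem2:
  fixes \<Gamma> :: "perm_k set" and k m :: nat
    and G :: "('v, 'e) lgraph" and H :: "('w, 'f) lgraph"
    and \<sigma>V :: "'v \<Rightarrow> 'w" and \<sigma>E :: "'e \<Rightarrow> 'f"
  assumes "subgroup_Sk k \<Gamma>" and "m \<ge> 1"
    and "Gm_graph \<Gamma> m G" and "Gm_graph \<Gamma> m H"
    and "Gm_hom G H \<sigma>V \<sigma>E"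
  shows "(\<forall>e1\<in>edges G. \<forall>e2\<in>edges G.
            src G e1 = src G e2 \<and> tgt G e1 = tgt G e2 \<and> lab H (\<sigma>E e1) = lab H (\<sigma>E e2)
            \<longrightarrow> lab G e1 = lab G e2)
       \<and> ((\<forall>e\<in>edges G. sym_labeled_edge G e) \<and>
          (\<exists>\<alpha>\<in>\<Gamma>. \<forall>e\<in>edges G. \<forall>a. labs G a e = \<alpha> \<circ> labs H a (\<sigma>E e))
          \<longrightarrow> (\<forall>e\<in>edges G. sym_labeled_edge H (\<sigma>E e)))"
proof (intro conjI ballI impI)
  show "lab G e1 = lab G e2"
    if "e1 \<in> edges G" "e2 \<in> edges G"
      and "src G e1 = src G e2 \<and> tgt G e1 = tgt G e2 \<and> lab H (\<sigma>E e1) = lab H (\<sigma>E e2)"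
    for e1 e2
    using Gm_hom_parallel_lab_eq[OF assms(1,3,4,5) that(1,2)] that(3) by simp
next
  fix e
  assume "e \<in> edges G"
    and "(\<forall>e\<in>edges G. sym_labeled_edge G e) \<and>
         (\<exists>\<alpha>\<in>\<Gamma>. \<forall>e\<in>edges G. \<forall>a. labs G a e = \<alpha> \<circ> labs H a (\<sigma>E e))"
  then obtain \<alpha> where \<alpha>: "\<alpha> \<in> \<Gamma>" and translate: "\<And>a. labs G a e = \<alpha> \<circ> labs H a (\<sigma>E e)"
    and sym: "sym_labeled_edge G e"
    by blast
  have "inj \<alpha>"
    using subgroup_Sk_bij[OF assms(1) \<alpha>] by (rule bij_is_inj)
  then show "sym_labeled_edge H (\<sigma>E e)"
    using translate sym by (rule sym_labeled_edge_left_translate)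
qed

end
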